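(* Let $s>0$ and let $(V_s,\oplus,\otimes)$ be the Möbius gyrovector space on the open disc $V_s=\{z\in\mathbb{C}:|z|<s\}$. Let $ABC$ be a gyrotriangle with vertices $A,B,C\in V_s$, and let $D$ be a point on the gyroside $BC$. Let $l$ be a gyroline passing through none of $A,B,C$, such that $l$ meets the gyroline $AB$ at $M$, the gyroline $AC$ at $N$, and the gyroline $AD$ at $P$. Then $$\frac{(BD)_\gamma}{(CD)_\gamma}\cdot\frac{(CA)_\gamma}{(NA)_\gamma}\cdot\frac{(NP)_\gamma}{(MP)_\gamma}\cdot\frac{(MA)_\gamma}{(BA)_\gamma}=1.$$
   Context: Möbius addition on $V_s$ is $a\oplus b=\dfrac{a+b}{1+\bar a b/s^2}$, with $\ominus a=-a$ and $a\ominus b=a\oplus(-b)$; for $s=1$ this is the Poincaré disc model of hyperbolic geometry. For points $P,Q\in V_s$, the gyrolength (hyperbolic gyrodistance) $PQ$ is $|\ominus P\oplus Q|$. Gyrolines are the geodesics of the Poincaré disc model, i.e. the sets $\{A\oplus(\ominus A\oplus B)\otimes t: t\in\mathbb{R}\}$ for distinct $A,B$ (the gyroline $AB$); equivalently, diameters of the disc and circular arcs in the disc orthogonal to its boundary. The gyroside $BC$ is the geodesic segment joining $B$ and $C$. For a gyrolength $v\in(-s,s)$, the notation $v_\gamma$ means $v_\gamma=\dfrac{v}{1-\frac{v^2}{s^2}}$. *)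

theory Defs
  imports Complex_Main
begin

definition mobius_disc :: "real \<Rightarrow> complex set" where
  "mobius_disc s = {z. cmod z < s}"

definition mobius_add :: "real \<Rightarrow> complex \<Rightarrow> complex \<Rightarrow> complex" where
  "mobius_add s a b = (a + b) / (1 + cnj a * b / (complex_of_real s)\<^sup>2)"

definition mobius_scale :: "real \<Rightarrow> real \<Rightarrow> complex \<Rightarrow> complex" where
  "mobius_scale s r a =
     (if a = 0 then 0
      else complex_of_real (s * tanh (r * artanh (cmod a / s))) * (a / complex_of_real (cmod a)))"

definition gyroline :: "real \<Rightarrow> complex \<Rightarrow> complex \<Rightarrow> complex set" where
  "gyroline s A B = {mobius_add s A (mobius_scale s t (mobius_add s (- A) B)) | t. True}"

definition gyrosegment :: "real \<Rightarrow> complex \<Rightarrow> complex \<Rightarrow> complex set" where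
  "gyrosegment s B C = {mobius_add s B (mobius_scale s t (mobius_add s (- B) C)) | t. 0 \<le> t \<and> t \<le> 1}"

definition is_gyroline :: "real \<Rightarrow> complex set \<Rightarrow> bool" where
  "is_gyroline s L \<longleftrightarrow> (\<exists>X Y. X \<in> mobius_disc s \<and> Y \<in> mobius_disc s \<and> X \<noteq> Y \<and> L = gyroline s X Y)"

definition gyrotriangle :: "real \<Rightarrow> complex \<Rightarrow> complex \<Rightarrow> complex \<Rightarrow> bool" where
  "gyrotriangle s A B C \<longleftrightarrow> A \<in> mobius_disc s \<and> B \<in> mobius_disc s \<and> C \<in> mobius_disc s \<and>
     A \<noteq> B \<and> A \<noteq> C \<and> B \<noteq> C \<and> C \<notin> gyroline s A B"

definition gyrodist :: "real \<Rightarrow> complex \<Rightarrow> complex \<Rightarrow> real" where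
  "gyrodist s P Q = cmod (mobius_add s (- P) Q)"

definition gamma_len :: "real \<Rightarrow> real \<Rightarrow> real" where
  "gamma_len s v = v / (1 - v\<^sup>2 / s\<^sup>2)"

end

theory Submission
  imports Defs
begin

text \<open>The left gyrotranslation \<open>X \<mapsto> \<ominus>A \<oplus> X\<close> preserves gyrodistances and sends \<open>A\<close> to \<open>0\<close>, so
  the gyrolines \<open>AB\<close>, \<open>AC\<close>, \<open>AD\<close> become diameters and the images \<open>m, n, p\<close> of \<open>M, N, P\<close> are real
  multiples \<open>\<mu> b, \<nu> c, \<pi> d\<close> of the images of \<open>B, C, D\<close>. In closed form
  \<open>(PQ)\<^sub>\<gamma> = s\<^sup>2 \<bar>Q - P\<bar> \<bar>s\<^sup>2 - P\<^sup>* Q\<bar> / ((s\<^sup>2 - \<bar>P\<bar>\<^sup>2) (s\<^sup>2 - \<bar>Q\<bar>\<^sup>2))\<close>; in the product the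
  denominators cancel, the factors at \<open>0\<close> reduce to \<open>\<bar>\<mu>\<bar>\<close> and \<open>1 / \<bar>\<nu>\<bar>\<close>, and the two remaining
  ratios are governed by a law of sines: for \<open>X, Y, Z\<close> on one gyroline,
  \<open>\<bar>Z - X\<bar> \<bar>s\<^sup>2 - X\<^sup>* Z\<bar> \<bar>Im (Y\<^sup>* Z)\<bar> = \<bar>Z - Y\<bar> \<bar>s\<^sup>2 - Y\<^sup>* Z\<bar> \<bar>Im (X\<^sup>* Z)\<bar>\<close>.
  Applied to \<open>b, c, d\<close> and to \<open>n, m, p\<close>, with \<open>Im (m\<^sup>* p) = \<mu> \<pi> Im (b\<^sup>* d)\<close> and
  \<open>Im (n\<^sup>* p) = \<nu> \<pi> Im (c\<^sup>* d)\<close>, it makes the product collapse to \<open>1\<close>.\<close>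

lemma tanh_artanh_real:
  fixes y :: real
  assumes "\<bar>y\<bar> < 1"
  shows "tanh (artanh y) = y"
proof -
  have p: "(1+y)/(1-y) > 0" using assms by (auto simp: abs_less_iff)
  have "exp (- 2 * artanh y) = (1-y)/(1+y)"
    using p assms by (simp add: artanh_def exp_minus exp_ln)
  then have "tanh (artanh y) = (1 - (1-y)/(1+y)) / (1 + (1-y)/(1+y))"
    by (simp add: tanh_real_altdef)
  also have "\<dots> = y" using assms by (simp add: field_simps abs_less_iff)
  finally show ?thesis .
qed

lemma mobius_add_eq:
  assumes "s \<noteq> 0"
  shows "mobius_add s a b = (complex_of_real s)\<^sup>2 * (a + b) / ((complex_of_real s)\<^sup>2 + cnj a * b)"
proof -
  have "1 + cnj a * b / (complex_of_real s)\<^sup>2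
      = ((complex_of_real s)\<^sup>2 + cnj a * b) / (complex_of_real s)\<^sup>2"
    using assms by (simp add: field_simps)
  then show ?thesis unfolding mobius_add_def by simp
qed

lemma mobius_add_0_right [simp]: "mobius_add s a 0 = a"
  by (simp add: mobius_add_def)

lemma mobius_add_neg_self [simp]: "mobius_add s (- a) a = 0"
  by (simp add: mobius_add_def)

lemma norm_mobius_denom_sq:
  "(cmod ((complex_of_real s)\<^sup>2 + cnj a * b))\<^sup>2
     = s\<^sup>2 * (cmod (a + b))\<^sup>2 + (s\<^sup>2 - (cmod a)\<^sup>2) * (s\<^sup>2 - (cmod b)\<^sup>2)"
  by (simp only: cmod_power2) (simp add: power2_eq_square algebra_simps)

lemma disc_gap_pos:
  assumes "s > 0" "cmod a < s"
  shows "s\<^sup>2 - (cmod a)\<^sup>2 > 0"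
  using assms by (simp add: power_strict_mono)

lemma mobius_gap_eq: "(complex_of_real s)\<^sup>2 - a * cnj a = complex_of_real (s\<^sup>2 - (cmod a)\<^sup>2)"
  by (simp add: complex_norm_square[symmetric])

lemma mobius_gap_ne_0:
  assumes "s > 0" "cmod a < s"
  shows "(complex_of_real s)\<^sup>2 - a * cnj a \<noteq> 0"
  using disc_gap_pos[OF assms] unfolding mobius_gap_eq of_real_eq_0_iff by simp

lemma mobius_denom_ne_0:
  assumes "s > 0" "cmod a < s" "cmod b < s"
  shows "(complex_of_real s)\<^sup>2 + cnj a * b \<noteq> 0"
proof -
  have "(s\<^sup>2 - (cmod a)\<^sup>2) * (s\<^sup>2 - (cmod b)\<^sup>2) > 0"
    using disc_gap_pos[OF assms(1,2)] disc_gap_pos[OF assms(1,3)] by simp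
  then have "(cmod ((complex_of_real s)\<^sup>2 + cnj a * b))\<^sup>2 > 0"
    unfolding norm_mobius_denom_sq by (simp add: add_nonneg_pos)
  then show ?thesis by auto
qed

lemma mobius_add_in_disc:
  assumes "s > 0" "cmod a < s" "cmod b < s"
  shows "cmod (mobius_add s a b) < s"
proof -
  let ?D = "cmod ((complex_of_real s)\<^sup>2 + cnj a * b)"
  have D: "?D > 0" using mobius_denom_ne_0[OF assms] by simp
  have "(s * cmod (a + b))\<^sup>2 < ?D\<^sup>2"
    using disc_gap_pos[OF assms(1,2)] disc_gap_pos[OF assms(1,3)]
    unfolding norm_mobius_denom_sq by (simp add: power_mult_distrib)
  then have "s * cmod (a + b) < ?D" using D by (auto intro: power_less_imp_less_base)
  then have "s\<^sup>2 * cmod (a + b) / ?D < s" using D assms(1) by (simp add: field_simps power2_eq_square)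
  then show ?thesis using assms(1) by (simp add: mobius_add_eq norm_mult norm_divide norm_power)
qed

lemma mobius_frac_diff:
  fixes S a a' x y :: "'a::field"
  assumes "S + a' * x \<noteq> 0" "S + a' * y \<noteq> 0"
  shows "S * (a + y) / (S + a' * y) - S * (a + x) / (S + a' * x)
       = S * (S - a * a') * (y - x) / ((S + a' * x) * (S + a' * y))"
proof -
  have "S * (a + y) / (S + a' * y) - S * (a + x) / (S + a' * x)
      = (S * (a + y) * (S + a' * x) - S * (a + x) * (S + a' * y)) / ((S + a' * x) * (S + a' * y))"
    using assms by (simp add: divide_simps)
  also have "S * (a + y) * (S + a' * x) - S * (a + x) * (S + a' * y) = S * (S - a * a') * (y - x)"
    by (simp add: algebra_simps)
  finally show ?thesis .
qed

lemma mobius_frac_cross: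
  fixes S a a' x x' y :: "'a::field"
  assumes "S + a * x' \<noteq> 0" "S + a' * y \<noteq> 0"
  shows "S - (S * (a' + x') / (S + a * x')) * (S * (a + y) / (S + a' * y))
       = S * (S - a * a') * (S - x' * y) / ((S + a * x') * (S + a' * y))"
proof -
  define D where "D = (S + a * x') * (S + a' * y)"
  have D: "D \<noteq> 0" using assms by (simp add: D_def)
  have "S - (S * (a' + x') / (S + a * x')) * (S * (a + y) / (S + a' * y))
      = S - (S * (a' + x')) * (S * (a + y)) / D"
    by (simp add: D_def)
  also have "\<dots> = (S * D - (S * (a' + x')) * (S * (a + y))) / D"
    using D by (simp add: field_simps)
  also have "S * D - (S * (a' + x')) * (S * (a + y)) = S * (S - a * a') * (S - x' * y)"
    by (simp add: D_def algebra_simps)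
  finally show ?thesis by (simp add: D_def)
qed

lemma mobius_frac_cancel:
  fixes S a a' w :: "'a::field"
  assumes "S \<noteq> 0" "S + a' * w \<noteq> 0" "S - a * a' \<noteq> 0"
  shows "S * (- a + S * (a + w) / (S + a' * w)) / (S + (- a') * (S * (a + w) / (S + a' * w))) = w"
proof -
  define d where "d = S + a' * w"
  have d: "d \<noteq> 0" using assms d_def by simp
  have n: "- a + S * (a + w) / d = w * (S - a * a') / d" using d by (simp add: field_simps d_def)
  have m: "S + (- a') * (S * (a + w) / d) = S * (S - a * a') / d" using d by (simp add: field_simps d_def)
  show ?thesis unfolding d_def[symmetric] n m using assms d by (simp add: field_simps)
qed

lemma mobius_add_diff:
  assumes "s \<noteq> 0" "(complex_of_real s)\<^sup>2 + cnj a * x \<noteq> 0" "(complex_of_real s)\<^sup>2 + cnj a * y \<noteq> 0"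
  shows "mobius_add s a y - mobius_add s a x
       = (complex_of_real s)\<^sup>2 * ((complex_of_real s)\<^sup>2 - a * cnj a) * (y - x)
         / (((complex_of_real s)\<^sup>2 + cnj a * x) * ((complex_of_real s)\<^sup>2 + cnj a * y))"
  unfolding mobius_add_eq[OF assms(1)] using mobius_frac_diff[OF assms(2,3)] .

lemma cnj_mobius_add:
  assumes "s \<noteq> 0"
  shows "cnj (mobius_add s a x) = (complex_of_real s)\<^sup>2 * (cnj a + cnj x) / ((complex_of_real s)\<^sup>2 + a * cnj x)"
  by (simp add: mobius_add_eq[OF assms])

lemma mobius_add_cross:
  assumes "s \<noteq> 0" "(complex_of_real s)\<^sup>2 + cnj a * x \<noteq> 0" "(complex_of_real s)\<^sup>2 + cnj a * y \<noteq> 0"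
  shows "(complex_of_real s)\<^sup>2 - cnj (mobius_add s a x) * mobius_add s a y
       = (complex_of_real s)\<^sup>2 * ((complex_of_real s)\<^sup>2 - a * cnj a) * ((complex_of_real s)\<^sup>2 - cnj x * y)
         / (cnj ((complex_of_real s)\<^sup>2 + cnj a * x) * ((complex_of_real s)\<^sup>2 + cnj a * y))"
proof -
  have e: "cnj ((complex_of_real s)\<^sup>2 + cnj a * x) = (complex_of_real s)\<^sup>2 + a * cnj x" by simp
  have c: "(complex_of_real s)\<^sup>2 + a * cnj x \<noteq> 0" using assms(2) e by (metis complex_cnj_zero_iff)
  show ?thesis
    unfolding e cnj_mobius_add[OF assms(1)] unfolding mobius_add_eq[OF assms(1)]
    using mobius_frac_cross[OF c assms(3)] .
qed

lemma mobius_add_left_cancel: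
  assumes "s > 0" "cmod a < s" "cmod w < s"
  shows "mobius_add s (- a) (mobius_add s a w) = w"
proof -
  have "mobius_add s (- a) z
      = (complex_of_real s)\<^sup>2 * (- a + z) / ((complex_of_real s)\<^sup>2 + (- cnj a) * z)" for z
    using mobius_add_eq[of s "- a" z] assms(1) by simp
  then show ?thesis
    using mobius_frac_cancel[OF _ mobius_denom_ne_0[OF assms] mobius_gap_ne_0[OF assms(1,2)]] assms(1)
    by (simp add: mobius_add_eq)
qed

lemma mobius_add_left_cancel':
  assumes "s > 0" "cmod a < s" "cmod w < s"
  shows "mobius_add s a (mobius_add s (- a) w) = w"
  using mobius_add_left_cancel[of s "- a" w] assms by simp

lemma mobius_add_left_inj:
  assumes "s > 0" "cmod a < s" "cmod x < s" "cmod y < s"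
  shows "mobius_add s a x = mobius_add s a y \<longleftrightarrow> x = y"
  using mobius_add_left_cancel[OF assms(1,2,3)] mobius_add_left_cancel[OF assms(1,2,4)] by metis

lemma mobius_add_neg_eq_0_iff:
  assumes "s > 0" "cmod a < s" "cmod x < s"
  shows "mobius_add s (- a) x = 0 \<longleftrightarrow> x = a"
  using mobius_add_left_inj[of s "- a" x a] assms by simp

lemma gyrodist_eq:
  assumes "s \<noteq> 0"
  shows "gyrodist s x y = s\<^sup>2 * cmod (y - x) / cmod ((complex_of_real s)\<^sup>2 - cnj x * y)"
proof -
  have "mobius_add s (- x) y = (complex_of_real s)\<^sup>2 * (y - x) / ((complex_of_real s)\<^sup>2 - cnj x * y)"
    using mobius_add_eq[OF assms, of "- x" y] by simp
  then show ?thesis unfolding gyrodist_def by (simp add: norm_mult norm_divide norm_power)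
qed

lemma gyrodist_mobius_add_left:
  assumes "s > 0" "cmod a < s" "cmod x < s" "cmod y < s"
  shows "gyrodist s (mobius_add s a x) (mobius_add s a y) = gyrodist s x y"
proof -
  have s0: "s \<noteq> 0" using assms by simp
  note dx = mobius_denom_ne_0[OF assms(1,2,3)] and dy = mobius_denom_ne_0[OF assms(1,2,4)]
  define k where "k = cmod ((complex_of_real s)\<^sup>2 - a * cnj a)"
  define px where "px = cmod ((complex_of_real s)\<^sup>2 + cnj a * x)"
  define py where "py = cmod ((complex_of_real s)\<^sup>2 + cnj a * y)"
  have pos: "k > 0" "px > 0" "py > 0"
    using mobius_gap_ne_0[OF assms(1,2)] dx dy by (auto simp: k_def px_def py_def)
  have "cmod (cnj ((complex_of_real s)\<^sup>2 + cnj a * x)) = px"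
    unfolding px_def by (rule complex_mod_cnj)
  then have cross: "cmod ((complex_of_real s)\<^sup>2 - cnj (mobius_add s a x) * mobius_add s a y)
      = s\<^sup>2 * k * cmod ((complex_of_real s)\<^sup>2 - cnj x * y) / (px * py)"
    unfolding mobius_add_cross[OF s0 dx dy] by (simp add: norm_mult norm_divide norm_power k_def py_def)
  have diff: "cmod (mobius_add s a y - mobius_add s a x) = s\<^sup>2 * k * cmod (y - x) / (px * py)"
    unfolding mobius_add_diff[OF s0 dx dy] by (simp add: norm_mult norm_divide norm_power k_def px_def py_def)
  show ?thesis unfolding gyrodist_eq[OF s0] cross diff using pos s0 by (simp add: field_simps eval_nat_numeral)
qed

definition gyrochord :: "real \<Rightarrow> complex \<Rightarrow> complex \<Rightarrow> real" where
  "gyrochord s x y = cmod ((y - x) * ((complex_of_real s)\<^sup>2 - cnj x * y))"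

lemma gyrochord_0_right: "gyrochord s x 0 = s\<^sup>2 * cmod x"
  by (simp add: gyrochord_def norm_mult norm_power)

lemma gyrochord_pos:
  assumes "s > 0" "cmod x < s" "cmod y < s" "x \<noteq> y"
  shows "gyrochord s x y > 0"
proof -
  have "(complex_of_real s)\<^sup>2 + cnj (- x) * y \<noteq> 0" using mobius_denom_ne_0[of s "- x" y] assms by simp
  then show ?thesis using assms(4) by (simp add: gyrochord_def norm_mult)
qed

lemma gamma_len_gyrodist:
  assumes "s > 0" "cmod x < s" "cmod y < s"
  shows "gamma_len s (gyrodist s x y)
       = s\<^sup>2 * gyrochord s x y / ((s\<^sup>2 - (cmod x)\<^sup>2) * (s\<^sup>2 - (cmod y)\<^sup>2))"
proof -
  define D where "D = cmod ((complex_of_real s)\<^sup>2 - cnj x * y)"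
  define P where "P = (s\<^sup>2 - (cmod x)\<^sup>2) * (s\<^sup>2 - (cmod y)\<^sup>2)"
  have D2: "D\<^sup>2 = s\<^sup>2 * (cmod (y - x))\<^sup>2 + P"
    using norm_mobius_denom_sq[of s "- x" y] by (simp add: D_def P_def)
  have P: "P > 0" using disc_gap_pos[OF assms(1,2)] disc_gap_pos[OF assms(1,3)] by (simp add: P_def)
  have D: "D > 0" using mobius_denom_ne_0[of s "- x" y] assms by (simp add: D_def)
  have "(s\<^sup>2 * cmod (y - x) / D)\<^sup>2 / s\<^sup>2 = s\<^sup>2 * (cmod (y - x))\<^sup>2 / D\<^sup>2"
    using D assms(1) by (simp add: field_simps power2_eq_square)
  moreover have "1 - s\<^sup>2 * (cmod (y - x))\<^sup>2 / D\<^sup>2 = (D\<^sup>2 - s\<^sup>2 * (cmod (y - x))\<^sup>2) / D\<^sup>2"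
    using D by (simp add: field_simps)
  ultimately have "1 - (s\<^sup>2 * cmod (y - x) / D)\<^sup>2 / s\<^sup>2 = P / D\<^sup>2" using D2 by simp
  then have "gamma_len s (gyrodist s x y) = (s\<^sup>2 * cmod (y - x) / D) / (P / D\<^sup>2)"
    using assms(1) by (simp add: gamma_len_def gyrodist_eq D_def)
  also have "\<dots> = s\<^sup>2 * (cmod (y - x) * D) / P"
    using D P by (simp add: field_simps power2_eq_square)
  finally show ?thesis by (simp add: gyrochord_def D_def P_def norm_mult)
qed

lemma mobius_frac_assoc:
  fixes S a a' u u' w :: "'a::field"
  assumes S: "S \<noteq> 0" and d1: "S + u' * w \<noteq> 0" and d2: "S + a' * u \<noteq> 0" and d3: "S + a * u' \<noteq> 0"
    and d4: "S + a' * (S * (u + w) / (S + u' * w)) \<noteq> 0"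
  shows "S * (a + S * (u + w) / (S + u' * w)) / (S + a' * (S * (u + w) / (S + u' * w)))
       = S * (S * (a + u) / (S + a' * u) + ((S + a * u') / (S + a' * u)) * w)
         / (S + (S * (a' + u') / (S + a * u')) * (((S + a * u') / (S + a' * u)) * w))"
proof -
  define X where "X = S * a + S * u + S * w + a * u' * w"
  define N where "N = S + a' * u + a' * w + u' * w"
  have cancel: "S * (X / d) / (S * N / d) = X / N" if "d \<noteq> 0" for d
    using S that by (cases "N = 0") (simp_all add: divide_simps)
  have dd: "S + a' * (S * (u + w) / (S + u' * w)) = S * N / (S + u' * w)"
    using d1 by (simp add: N_def field_simps; simp add: algebra_simps)
  have nn: "a + S * (u + w) / (S + u' * w) = X / (S + u' * w)"
    using d1 by (simp add: X_def field_simps; simp add: algebra_simps)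
  have r1: "S * (a + u) / (S + a' * u) + ((S + a * u') / (S + a' * u)) * w = X / (S + a' * u)"
  proof -
    have "S * (a + u) / (S + a' * u) + ((S + a * u') / (S + a' * u)) * w
        = (S * (a + u) + (S + a * u') * w) / (S + a' * u)"
      by (simp only: times_divide_eq_left add_divide_distrib[symmetric])
    also have "S * (a + u) + (S + a * u') * w = X" by (simp add: X_def algebra_simps)
    finally show ?thesis .
  qed
  have r2: "S + (S * (a' + u') / (S + a * u')) * (((S + a * u') / (S + a' * u)) * w) = S * N / (S + a' * u)"
  proof -
    have "(S * (a' + u') / (S + a * u')) * (((S + a * u') / (S + a' * u)) * w) = S * (a' + u') * w / (S + a' * u)"
      using d3 by simp
    moreover have "S + S * (a' + u') * w / (S + a' * u) = (S * (S + a' * u) + S * (a' + u') * w) / (S + a' * u)"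
      using d2 by (simp add: field_simps)
    moreover have "S * (S + a' * u) + S * (a' + u') * w = S * N" by (simp add: N_def algebra_simps)
    ultimately show ?thesis by (metis (no_types, lifting))
  qed
  show ?thesis unfolding dd nn r1 r2 cancel[OF d1] cancel[OF d2] ..
qed

text \<open>Gyroassociativity: on the disc the gyration \<open>gyr[a, u]\<close> is multiplication by the
  unimodular factor \<open>(s\<^sup>2 + a \<bar>u) / (s\<^sup>2 + \<bar>a u)\<close>.\<close>

lemma mobius_add_assoc:
  assumes s: "s > 0" and a: "cmod a < s" and u: "cmod u < s" and w: "cmod w < s"
  shows "mobius_add s a (mobius_add s u w) =
    mobius_add s (mobius_add s a u) (((complex_of_real s)\<^sup>2 + a * cnj u) / ((complex_of_real s)\<^sup>2 + cnj a * u) * w)"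
proof -
  have s0: "s \<noteq> 0" using s by simp
  have d3: "(complex_of_real s)\<^sup>2 + a * cnj u \<noteq> 0"
    using mobius_denom_ne_0[OF s u a] by (simp add: mult.commute)
  have d4: "(complex_of_real s)\<^sup>2 + cnj a * ((complex_of_real s)\<^sup>2 * (u + w) / ((complex_of_real s)\<^sup>2 + cnj u * w)) \<noteq> 0"
    using mobius_denom_ne_0[OF s a mobius_add_in_disc[OF s u w]] mobius_add_eq[OF s0, of u w] by simp
  have R: "mobius_add s (mobius_add s a u) z = (complex_of_real s)\<^sup>2 * (mobius_add s a u + z)
      / ((complex_of_real s)\<^sup>2 + cnj (mobius_add s a u) * z)" for z
    by (rule mobius_add_eq[OF s0])
  show ?thesis
    unfolding R cnj_mobius_add[OF s0] unfolding mobius_add_eq[OF s0]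
    using s0 by (intro mobius_frac_assoc mobius_denom_ne_0 d3 d4) (simp_all add: s u w a)
qed

lemma norm_gyr_factor:
  assumes "s > 0" "cmod a < s" "cmod u < s"
  shows "cmod (((complex_of_real s)\<^sup>2 + a * cnj u) / ((complex_of_real s)\<^sup>2 + cnj a * u)) = 1"
proof -
  have "cnj ((complex_of_real s)\<^sup>2 + cnj a * u) = (complex_of_real s)\<^sup>2 + a * cnj u" by simp
  then have "cmod ((complex_of_real s)\<^sup>2 + a * cnj u) = cmod ((complex_of_real s)\<^sup>2 + cnj a * u)"
    by (metis complex_mod_cnj)
  then show ?thesis using mobius_denom_ne_0[OF assms] by (simp add: norm_divide)
qed

definition dir_gyroline :: "real \<Rightarrow> complex \<Rightarrow> complex \<Rightarrow> complex set" where
  "dir_gyroline s U e = {mobius_add s U (complex_of_real \<alpha> * e) | \<alpha>. \<bar>\<alpha>\<bar> < s}"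

lemma dir_gyroline_in_disc:
  assumes "s > 0" "cmod U < s" "cmod e = 1" "X \<in> dir_gyroline s U e"
  shows "cmod X < s"
  using assms unfolding dir_gyroline_def by (auto intro!: mobius_add_in_disc simp: norm_mult)

lemma mobius_add_dir_gyroline:
  assumes s: "s > 0" and a: "cmod a < s" and U: "cmod U < s" and e: "cmod e = 1"
    and X: "X \<in> dir_gyroline s U e"
  shows "mobius_add s a X \<in> dir_gyroline s (mobius_add s a U)
     ((((complex_of_real s)\<^sup>2 + a * cnj U) / ((complex_of_real s)\<^sup>2 + cnj a * U)) * e)"
proof -
  obtain \<alpha> where \<alpha>: "\<bar>\<alpha>\<bar> < s" and X: "X = mobius_add s U (complex_of_real \<alpha> * e)"
    using X unfolding dir_gyroline_def by auto
  have w: "cmod (complex_of_real \<alpha> * e) < s" using \<alpha> e by (simp add: norm_mult)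
  have "mobius_add s a X = mobius_add s (mobius_add s a U) (complex_of_real \<alpha> *
     ((((complex_of_real s)\<^sup>2 + a * cnj U) / ((complex_of_real s)\<^sup>2 + cnj a * U)) * e))"
    unfolding X mobius_add_assoc[OF s a U w] by (simp add: ac_simps)
  then show ?thesis using \<alpha> unfolding dir_gyroline_def by blast
qed

lemma gyrochord_dir_gyroline:
  assumes s: "s > 0" and U: "cmod U < s" and e: "cmod e = 1" and \<alpha>: "\<bar>\<alpha>\<bar> < s" and \<gamma>: "\<bar>\<gamma>\<bar> < s"
  shows "gyrochord s (mobius_add s U (complex_of_real \<alpha> * e)) (mobius_add s U (complex_of_real \<gamma> * e))
   = s ^ 4 * (s\<^sup>2 - (cmod U)\<^sup>2)\<^sup>2 * \<bar>\<gamma> - \<alpha>\<bar> * \<bar>s\<^sup>2 - \<alpha> * \<gamma>\<bar>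
     / ((cmod ((complex_of_real s)\<^sup>2 + cnj U * (complex_of_real \<alpha> * e)))\<^sup>2
        * (cmod ((complex_of_real s)\<^sup>2 + cnj U * (complex_of_real \<gamma> * e)))\<^sup>2)"
proof -
  have s0: "s \<noteq> 0" using s by simp
  have "cmod (complex_of_real \<alpha> * e) < s" "cmod (complex_of_real \<gamma> * e) < s"
    using \<alpha> \<gamma> e by (simp_all add: norm_mult)
  note dx = mobius_denom_ne_0[OF s U this(1)] and dy = mobius_denom_ne_0[OF s U this(2)]
  have diff: "complex_of_real \<gamma> * e - complex_of_real \<alpha> * e = complex_of_real (\<gamma> - \<alpha>) * e"
    by (simp add: algebra_simps)
  have "cnj (complex_of_real \<alpha> * e) * (complex_of_real \<gamma> * e) = complex_of_real (\<alpha> * \<gamma>) * (e * cnj e)"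
    by (simp add: ac_simps)
  then have cross: "(complex_of_real s)\<^sup>2 - cnj (complex_of_real \<alpha> * e) * (complex_of_real \<gamma> * e)
      = complex_of_real (s\<^sup>2 - \<alpha> * \<gamma>)"
    using e by (simp add: complex_norm_square[symmetric])
  have c0: "cmod (cnj ((complex_of_real s)\<^sup>2 + cnj U * (complex_of_real \<alpha> * e)))
      = cmod ((complex_of_real s)\<^sup>2 + cnj U * (complex_of_real \<alpha> * e))"
    by (rule complex_mod_cnj)
  show ?thesis
    unfolding gyrochord_def mobius_add_diff[OF s0 dx dy] mobius_add_cross[OF s0 dx dy] mobius_gap_eq diff cross
    apply (simp only: norm_mult norm_divide norm_of_real norm_power c0 e
        abs_of_pos[OF disc_gap_pos[OF s U]] abs_of_pos[OF s])
    apply (simp add: power2_eq_square field_simps eval_nat_numeral)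
    done
qed

lemma cnj_mobius_add_mult:
  assumes s: "s > 0" and U: "cmod U < s" and y: "cmod y < s" and z: "cmod z < s"
  shows "cnj (mobius_add s U y) * mobius_add s U z
       = complex_of_real (s ^ 4 / ((cmod ((complex_of_real s)\<^sup>2 + cnj U * y))\<^sup>2
                                  * (cmod ((complex_of_real s)\<^sup>2 + cnj U * z))\<^sup>2))
         * (cnj ((U + y) * cnj ((complex_of_real s)\<^sup>2 + cnj U * y))
            * ((U + z) * cnj ((complex_of_real s)\<^sup>2 + cnj U * z)))"
proof -
  have s0: "s \<noteq> 0" using s by simp
  define dy where "dy = (complex_of_real s)\<^sup>2 + cnj U * y"
  define dz where "dz = (complex_of_real s)\<^sup>2 + cnj U * z"
  have "dy \<noteq> 0" "dz \<noteq> 0"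
    using mobius_denom_ne_0[OF s U y] mobius_denom_ne_0[OF s U z] by (simp_all add: dy_def dz_def)
  then have d: "dy \<noteq> 0" "cnj dy \<noteq> 0" "dz \<noteq> 0" by simp_all
  have "cnj (mobius_add s U y) * mobius_add s U z
      = (complex_of_real s)\<^sup>2 * (complex_of_real s)\<^sup>2 * (cnj (U + y) * (U + z)) * (dy * cnj dz)
        / ((dy * cnj dy) * (dz * cnj dz))"
    unfolding cnj_mobius_add[OF s0] mobius_add_eq[OF s0] dy_def[symmetric] dz_def[symmetric]
      complex_cnj_add[of "(complex_of_real s)\<^sup>2", symmetric]
    using d by (simp add: field_simps)
  also have "\<dots> = complex_of_real (s ^ 4 / ((cmod dy)\<^sup>2 * (cmod dz)\<^sup>2))
      * (cnj ((U + y) * cnj dy) * ((U + z) * cnj dz))"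
    unfolding complex_norm_square[symmetric] by (simp add: field_simps eval_nat_numeral)
  finally show ?thesis unfolding dy_def dz_def .
qed

lemma Im_cnj_real_combination:
  "Im (cnj (complex_of_real p * U + complex_of_real b * V) * (complex_of_real q * U + complex_of_real c * V))
     = (p * c - b * q) * Im (cnj U * V)"
  by (simp add: algebra_simps)

lemma Im_cnj_dir_gyroline:
  assumes s: "s > 0" and U: "cmod U < s" and e: "cmod e = 1" and \<beta>: "\<bar>\<beta>\<bar> < s" and \<gamma>: "\<bar>\<gamma>\<bar> < s"
  shows "\<bar>Im (cnj (mobius_add s U (complex_of_real \<beta> * e)) * mobius_add s U (complex_of_real \<gamma> * e))\<bar>
   = s ^ 4 * (s\<^sup>2 - (cmod U)\<^sup>2) * \<bar>Im (cnj U * e)\<bar> * \<bar>\<gamma> - \<beta>\<bar> * \<bar>s\<^sup>2 - \<beta> * \<gamma>\<bar>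
     / ((cmod ((complex_of_real s)\<^sup>2 + cnj U * (complex_of_real \<beta> * e)))\<^sup>2
        * (cmod ((complex_of_real s)\<^sup>2 + cnj U * (complex_of_real \<gamma> * e)))\<^sup>2)"
proof -
  define r where "r = s ^ 4 / ((cmod ((complex_of_real s)\<^sup>2 + cnj U * (complex_of_real \<beta> * e)))\<^sup>2
                                * (cmod ((complex_of_real s)\<^sup>2 + cnj U * (complex_of_real \<gamma> * e)))\<^sup>2)"
  define V where "V = U\<^sup>2 * cnj e + (complex_of_real s)\<^sup>2 * e"
  have ee: "e * cnj e = 1" using e by (simp add: complex_norm_square[symmetric])
  have numer: "(U + complex_of_real t * e) * cnj ((complex_of_real s)\<^sup>2 + cnj U * (complex_of_real t * e))
      = complex_of_real (s\<^sup>2 + t\<^sup>2) * U + complex_of_real t * V" for t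
  proof -
    have "(U + complex_of_real t * e) * cnj ((complex_of_real s)\<^sup>2 + cnj U * (complex_of_real t * e))
       = complex_of_real (s\<^sup>2) * U + complex_of_real t * V + complex_of_real (t\<^sup>2) * U * (e * cnj e)"
      by (simp add: V_def algebra_simps power2_eq_square)
    then show ?thesis using ee by (simp add: algebra_simps)
  qed
  have Im_real_mult: "Im (complex_of_real c * w) = c * Im w" for c w by simp
  have ImV: "Im (cnj U * V) = (s\<^sup>2 - (cmod U)\<^sup>2) * Im (cnj U * e)"
    unfolding V_def by (simp only: cmod_power2) (simp add: power2_eq_square algebra_simps)
  have w: "cmod (complex_of_real \<beta> * e) < s" "cmod (complex_of_real \<gamma> * e) < s"
    using \<beta> \<gamma> e by (simp_all add: norm_mult)
  have "Im (cnj (mobius_add s U (complex_of_real \<beta> * e)) * mobius_add s U (complex_of_real \<gamma> * e))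
      = r * (((s\<^sup>2 + \<beta>\<^sup>2) * \<gamma> - \<beta> * (s\<^sup>2 + \<gamma>\<^sup>2)) * ((s\<^sup>2 - (cmod U)\<^sup>2) * Im (cnj U * e)))"
    unfolding cnj_mobius_add_mult[OF s U w] numer r_def[symmetric] Im_real_mult
      Im_cnj_real_combination ImV ..
  also have "((s\<^sup>2 + \<beta>\<^sup>2) * \<gamma> - \<beta> * (s\<^sup>2 + \<gamma>\<^sup>2)) = (\<gamma> - \<beta>) * (s\<^sup>2 - \<beta> * \<gamma>)"
    by (simp add: algebra_simps power2_eq_square)
  finally show ?thesis
    using disc_gap_pos[OF s U] by (simp add: r_def abs_mult mult_ac)
qed

text \<open>For a fixed point \<open>Z\<close> of a gyroline, \<open>\<bar>Im (cnj X * Z)\<bar> / gyrochord s X Z\<close> does not depend on the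
  point \<open>X\<close> of the gyroline: a law of sines for gyrotriangles with a vertex at the origin.\<close>

lemma dir_gyroline_sine_law:
  assumes s: "s > 0" and U: "cmod U < s" and e: "cmod e = 1"
    and X: "X \<in> dir_gyroline s U e" and Y: "Y \<in> dir_gyroline s U e" and Z: "Z \<in> dir_gyroline s U e"
  shows "gyrochord s X Z * \<bar>Im (cnj Y * Z)\<bar> = gyrochord s Y Z * \<bar>Im (cnj X * Z)\<bar>"
proof -
  obtain \<alpha> where \<alpha>: "\<bar>\<alpha>\<bar> < s" and X: "X = mobius_add s U (complex_of_real \<alpha> * e)"
    using X unfolding dir_gyroline_def by auto
  obtain \<beta> where \<beta>: "\<bar>\<beta>\<bar> < s" and Y: "Y = mobius_add s U (complex_of_real \<beta> * e)"
    using Y unfolding dir_gyroline_def by auto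
  obtain \<gamma> where \<gamma>: "\<bar>\<gamma>\<bar> < s" and Z: "Z = mobius_add s U (complex_of_real \<gamma> * e)"
    using Z unfolding dir_gyroline_def by auto
  show ?thesis
    unfolding X Y Z gyrochord_dir_gyroline[OF s U e \<alpha> \<gamma>] gyrochord_dir_gyroline[OF s U e \<beta> \<gamma>]
      Im_cnj_dir_gyroline[OF s U e \<beta> \<gamma>] Im_cnj_dir_gyroline[OF s U e \<alpha> \<gamma>]
    by (simp add: field_simps)
qed

lemma mobius_scale_nonzero:
  assumes s: "s > 0" and v: "v \<noteq> 0"
  shows "mobius_scale s t v = complex_of_real (s * tanh (t * artanh (cmod v / s))) * (v / complex_of_real (cmod v))"
    and "\<bar>s * tanh (t * artanh (cmod v / s))\<bar> < s"
proof -
  show "mobius_scale s t v = complex_of_real (s * tanh (t * artanh (cmod v / s))) * (v / complex_of_real (cmod v))"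
    using v unfolding mobius_scale_def by simp
  have "\<bar>tanh (t * artanh (cmod v / s))\<bar> < 1" using tanh_real_bounds[of "t * artanh (cmod v / s)"] by auto
  then show "\<bar>s * tanh (t * artanh (cmod v / s))\<bar> < s" using s by (simp add: abs_mult)
qed

lemma mobius_scale_in_disc:
  assumes "s > 0"
  shows "cmod (mobius_scale s t v) < s"
proof (cases "v = 0")
  case True
  then show ?thesis using assms by (simp add: mobius_scale_def)
next
  case False
  then show ?thesis
    unfolding mobius_scale_nonzero(1)[OF assms False] using mobius_scale_nonzero(2)[OF assms False]
    by (simp add: norm_mult norm_divide abs_mult)
qed

lemma mobius_scale_real_multiple:
  assumes "s > 0"
  obtains \<mu> where "mobius_scale s t v = complex_of_real \<mu> * v"
proof (cases "v = 0")
  case True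
  then show ?thesis using that[of 0] by (simp add: mobius_scale_def)
next
  case False
  then show ?thesis
    using that[of "s * tanh (t * artanh (cmod v / s)) / cmod v"]
    unfolding mobius_scale_nonzero(1)[OF assms False] by (simp add: field_simps)
qed

lemma mobius_scale_0 [simp]: "mobius_scale s 0 v = 0"
  by (simp add: mobius_scale_def)

lemma mobius_scale_1:
  assumes "s > 0" "cmod v < s"
  shows "mobius_scale s 1 v = v"
proof (cases "v = 0")
  case True
  then show ?thesis by (simp add: mobius_scale_def)
next
  case False
  have "\<bar>cmod v / s\<bar> < 1" using assms by (simp add: divide_less_eq)
  then show ?thesis
    unfolding mobius_scale_nonzero(1)[OF assms(1) False] using assms(1) False
    by (simp add: tanh_artanh_real)
qed

lemma gyroline_in_disc:
  assumes "s > 0" "cmod U < s" "Z \<in> gyroline s U V"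
  shows "cmod Z < s"
  using assms unfolding gyroline_def by (auto intro!: mobius_add_in_disc mobius_scale_in_disc)

lemma left_in_gyroline: "U \<in> gyroline s U V"
  unfolding gyroline_def by (auto intro!: exI[of _ 0])

lemma right_in_gyroline:
  assumes "s > 0" "cmod U < s" "cmod V < s"
  shows "V \<in> gyroline s U V"
proof -
  have "cmod (mobius_add s (- U) V) < s" using assms by (simp add: mobius_add_in_disc)
  then have "V = mobius_add s U (mobius_scale s 1 (mobius_add s (- U) V))"
    by (simp add: mobius_scale_1 assms mobius_add_left_cancel')
  then show ?thesis unfolding gyroline_def by blast
qed

lemma gyroline_subset_dir_gyroline:
  assumes s: "s > 0" and U: "cmod U < s" and V: "cmod V < s" and UV: "U \<noteq> V"
  defines "v \<equiv> mobius_add s (- U) V"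
  shows "gyroline s U V \<subseteq> dir_gyroline s U (v / complex_of_real (cmod v))"
proof
  have v: "v \<noteq> 0" unfolding v_def using mobius_add_neg_eq_0_iff[OF s U V] UV by simp
  fix Z assume "Z \<in> gyroline s U V"
  then obtain t where "Z = mobius_add s U (mobius_scale s t v)" unfolding gyroline_def v_def by auto
  then show "Z \<in> dir_gyroline s U (v / complex_of_real (cmod v))"
    unfolding dir_gyroline_def mobius_scale_nonzero(1)[OF s v] using mobius_scale_nonzero(2)[OF s v] by blast
qed

lemma mobius_add_gyroline_subset:
  assumes s: "s > 0" and a: "cmod a < s" and U: "cmod U < s" and V: "cmod V < s" and UV: "U \<noteq> V"
  obtains U' e' where "cmod U' < s" "cmod e' = 1" "mobius_add s a ` gyroline s U V \<subseteq> dir_gyroline s U' e'"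
proof -
  define v where "v = mobius_add s (- U) V"
  define e where "e = v / complex_of_real (cmod v)"
  have "v \<noteq> 0" unfolding v_def using mobius_add_neg_eq_0_iff[OF s U V] UV by simp
  then have e: "cmod e = 1" by (simp add: e_def norm_divide)
  show ?thesis
  proof
    show "cmod (mobius_add s a U) < s" using s a U by (rule mobius_add_in_disc)
    show "cmod ((((complex_of_real s)\<^sup>2 + a * cnj U) / ((complex_of_real s)\<^sup>2 + cnj a * U)) * e) = 1"
      unfolding norm_mult norm_gyr_factor[OF s a U] e by simp
    show "mobius_add s a ` gyroline s U V \<subseteq> dir_gyroline s (mobius_add s a U)
        ((((complex_of_real s)\<^sup>2 + a * cnj U) / ((complex_of_real s)\<^sup>2 + cnj a * U)) * e)"
      using gyroline_subset_dir_gyroline[OF s U V UV] mobius_add_dir_gyroline[OF s a U e]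
      unfolding e_def v_def by blast
  qed
qed

lemma is_gyroline_in_disc:
  assumes "s > 0" "is_gyroline s L" "Z \<in> L"
  shows "cmod Z < s"
proof -
  obtain X Y where "cmod X < s" "L = gyroline s X Y"
    using assms(2) unfolding is_gyroline_def mobius_disc_def by auto
  then show ?thesis using gyroline_in_disc[OF assms(1)] assms(3) by blast
qed

lemma mobius_add_is_gyroline_subset:
  assumes s: "s > 0" and a: "cmod a < s" and L: "is_gyroline s L"
  obtains U e where "cmod U < s" "cmod e = 1" "\<And>Z. Z \<in> L \<Longrightarrow> mobius_add s a Z \<in> dir_gyroline s U e"
proof -
  obtain X Y where "cmod X < s" "cmod Y < s" "X \<noteq> Y" and L: "L = gyroline s X Y"
    using L unfolding is_gyroline_def mobius_disc_def by auto
  then obtain U e where "cmod U < s" "cmod e = 1" "mobius_add s a ` L \<subseteq> dir_gyroline s U e"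
    using mobius_add_gyroline_subset[OF s a] by metis
  then show ?thesis by (intro that) auto
qed

lemma gyroline_translate_real_multiple:
  assumes s: "s > 0" and A: "cmod A < s" and M: "M \<in> gyroline s A B"
  obtains \<mu> where "mobius_add s (- A) M = complex_of_real \<mu> * mobius_add s (- A) B"
proof -
  obtain t where "M = mobius_add s A (mobius_scale s t (mobius_add s (- A) B))"
    using M unfolding gyroline_def by auto
  then have "mobius_add s (- A) M = mobius_scale s t (mobius_add s (- A) B)"
    using mobius_add_left_cancel[OF s A mobius_scale_in_disc[OF s]] by simp
  then show ?thesis using mobius_scale_real_multiple[OF s] that by metis
qed

lemma in_gyroline_if_Im_cnj_eq_0:
  assumes s: "s > 0" and A: "cmod A < s" and B: "cmod B < s" and C: "cmod C < s"
    and b0: "mobius_add s (- A) B \<noteq> 0"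
    and Im0: "Im (cnj (mobius_add s (- A) B) * mobius_add s (- A) C) = 0"
  shows "C \<in> gyroline s A B"
proof -
  define b where "b = mobius_add s (- A) B"
  define c where "c = mobius_add s (- A) C"
  have b: "cmod b < s" "b \<noteq> 0" using mobius_add_in_disc[OF s _ B, of "- A"] A b0 by (simp_all add: b_def)
  have c: "cmod c < s" using mobius_add_in_disc[OF s _ C, of "- A"] A by (simp add: c_def)
  define r where "r = Re (cnj b * c) / (cmod b)\<^sup>2"
  have "c * (b * cnj b) = b * (cnj b * c)" by (simp add: ac_simps)
  then have cr: "c = complex_of_real r * b"
    using Im0 b(2) unfolding complex_norm_square[symmetric] r_def b_def c_def
    by (simp add: complex_eq_iff field_simps)
  define k where "k = artanh (cmod b / s)"
  have "\<bar>cmod b / s\<bar> < 1" using b s by (simp add: divide_less_eq)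
  then have k: "tanh k = cmod b / s" unfolding k_def by (rule tanh_artanh_real)
  then have k0: "k \<noteq> 0" using b(2) s by auto
  define x where "x = r * cmod b / s"
  have "\<bar>x\<bar> < 1" using c s b(2) unfolding x_def cr by (simp add: abs_mult abs_divide norm_mult)
  then have "tanh (artanh x / k * k) = x"
    using k0 by (simp add: tanh_artanh_real)
  then have "mobius_scale s (artanh x / k) b = c"
    unfolding mobius_scale_nonzero(1)[OF s b(2)] k_def[symmetric] cr using s b(2) by (simp add: x_def field_simps)
  then have "C = mobius_add s A (mobius_scale s (artanh x / k) b)"
    using mobius_add_left_cancel'[OF s A C] c_def by simp
  then show ?thesis unfolding gyroline_def b_def by blast
qed

lemma Im_cnj_mult_eq_0_trans:
  fixes b c d :: complex
  assumes "Im (cnj b * d) = 0" "Im (cnj c * d) = 0" "d \<noteq> 0"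
  shows "Im (cnj b * c) = 0"
proof -
  define X where "X = Re b * Im c - Im b * Re c"
  have "X * Im d = Im c * (Re b * Im d - Im b * Re d) - Im b * (Re c * Im d - Im c * Re d)"
    "X * Re d = Re c * (Re b * Im d - Im b * Re d) - Re b * (Re c * Im d - Im c * Re d)"
    unfolding X_def by (simp_all add: algebra_simps)
  then have "X * Im d = 0" "X * Re d = 0" using assms(1,2) by simp_all
  moreover have "Re d \<noteq> 0 \<or> Im d \<noteq> 0" using assms(3) complex_eq_iff by auto
  ultimately have "X = 0" by auto
  then show ?thesis unfolding X_def by simp
qed

lemma dir_gyroline_Im_cnj_ne_0:
  assumes s: "s > 0" and U: "cmod U < s" and e: "cmod e = 1"
    and X: "X \<in> dir_gyroline s U e" and Y: "Y \<in> dir_gyroline s U e" and Z: "Z \<in> dir_gyroline s U e"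
    and XY: "Im (cnj X * Y) \<noteq> 0" and YZ: "Y \<noteq> Z"
  shows "Im (cnj Y * Z) \<noteq> 0"
proof
  assume YZ0: "Im (cnj Y * Z) = 0"
  show False
  proof (cases "Z = 0")
    case True
    have "gyrochord s X Y * \<bar>Im (cnj Z * Y)\<bar> = gyrochord s Z Y * \<bar>Im (cnj X * Y)\<bar>"
      by (rule dir_gyroline_sine_law[OF s U e X Z Y])
    then have "s\<^sup>2 * cmod Y * \<bar>Im (cnj X * Y)\<bar> = 0" using True by (auto simp add: gyrochord_def norm_mult norm_power)
    then show False using XY YZ True s by simp
  next
    case False
    have "gyrochord s X Z * \<bar>Im (cnj Y * Z)\<bar> = gyrochord s Y Z * \<bar>Im (cnj X * Z)\<bar>"
      by (rule dir_gyroline_sine_law[OF s U e X Y Z])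
    then have "Im (cnj X * Z) = 0"
      using YZ0 gyrochord_pos[OF s dir_gyroline_in_disc[OF s U e Y] dir_gyroline_in_disc[OF s U e Z] YZ] by simp
    then show False using Im_cnj_mult_eq_0_trans[OF _ YZ0 False] XY by blast
  qed
qed

lemma menelaus_product_arith:
  fixes s gb gc gd gm gn gp g0 hbd hcd hnp hmp hc0 hb0 hn0 hm0 \<mu> \<nu> \<pi> Ibd Icd :: real
  assumes pos: "s > 0" "gb > 0" "gc > 0" "gd > 0" "gm > 0" "gn > 0" "gp > 0" "g0 > 0"
    "hbd > 0" "hcd > 0" "hmp > 0" "hc0 > 0" "hb0 > 0" "\<mu> > 0" "\<nu> > 0" "\<pi> > 0" "Icd > 0"
    and bcd: "hbd * Icd = hcd * Ibd"
    and mnp: "hnp * (\<mu> * \<pi> * Ibd) = hmp * (\<nu> * \<pi> * Icd)"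
    and "hn0 = \<nu> * hc0" "hm0 = \<mu> * hb0"
  shows "s\<^sup>2 * hbd / (gb * gd) / (s\<^sup>2 * hcd / (gc * gd))
       * (s\<^sup>2 * hc0 / (gc * g0) / (s\<^sup>2 * hn0 / (gn * g0)))
       * (s\<^sup>2 * hnp / (gn * gp) / (s\<^sup>2 * hmp / (gm * gp)))
       * (s\<^sup>2 * hm0 / (gm * g0) / (s\<^sup>2 * hb0 / (gb * g0))) = 1"
proof -
  have Ibd: "Ibd = hbd * Icd / hcd" using bcd pos by (simp add: field_simps)
  then have "Ibd > 0" using pos by simp
  then have "hnp = hmp * \<nu> * Icd / (\<mu> * Ibd)" using mnp pos by (simp add: field_simps)
  then show ?thesis unfolding Ibd assms(20,21) using pos by (simp add: field_simps)
qed

lemma menelaus_at_origin: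
  assumes s: "s > 0" and Ue: "cmod U < s" "cmod e = 1" and Ue': "cmod U' < s" "cmod e' = 1"
    and bcd: "b \<in> dir_gyroline s U e" "c \<in> dir_gyroline s U e" "d \<in> dir_gyroline s U e"
    and mnp: "m \<in> dir_gyroline s U' e'" "n \<in> dir_gyroline s U' e'" "p \<in> dir_gyroline s U' e'"
    and \<mu>: "m = complex_of_real \<mu> * b" and \<nu>: "n = complex_of_real \<nu> * c" and \<pi>: "p = complex_of_real \<pi> * d"
    and nz: "m \<noteq> 0" "n \<noteq> 0" "p \<noteq> 0"
    and bc: "Im (cnj b * c) \<noteq> 0" and bd: "b \<noteq> d" and cd: "c \<noteq> d"
  shows "gamma_len s (gyrodist s b d) / gamma_len s (gyrodist s c d)
       * (gamma_len s (gyrodist s c 0) / gamma_len s (gyrodist s n 0))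
       * (gamma_len s (gyrodist s n p) / gamma_len s (gyrodist s m p))
       * (gamma_len s (gyrodist s m 0) / gamma_len s (gyrodist s b 0)) = 1"
proof -
  note disc = dir_gyroline_in_disc[OF s Ue bcd(1)] dir_gyroline_in_disc[OF s Ue bcd(2)]
    dir_gyroline_in_disc[OF s Ue bcd(3)] dir_gyroline_in_disc[OF s Ue' mnp(1)]
    dir_gyroline_in_disc[OF s Ue' mnp(2)] dir_gyroline_in_disc[OF s Ue' mnp(3)]
  have zero: "cmod (0::complex) < s" using s by simp
  note gamma = gamma_len_gyrodist[OF s disc(1,3)] gamma_len_gyrodist[OF s disc(2,3)]
    gamma_len_gyrodist[OF s disc(2) zero] gamma_len_gyrodist[OF s disc(5) zero]
    gamma_len_gyrodist[OF s disc(5,6)] gamma_len_gyrodist[OF s disc(4,6)]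
    gamma_len_gyrodist[OF s disc(4) zero] gamma_len_gyrodist[OF s disc(1) zero]
  have Icd: "Im (cnj c * d) \<noteq> 0" by (rule dir_gyroline_Im_cnj_ne_0[OF s Ue bcd bc cd])
  have "Im (cnj c * b) \<noteq> 0" using bc by (simp add: algebra_simps)
  then have Ibd: "Im (cnj b * d) \<noteq> 0" by (rule dir_gyroline_Im_cnj_ne_0[OF s Ue bcd(2,1,3) _ bd])
  have Imp: "Im (cnj m * p) = \<mu> * \<pi> * Im (cnj b * d)" unfolding \<mu> \<pi> by (simp add: algebra_simps)
  have Inp: "Im (cnj n * p) = \<nu> * \<pi> * Im (cnj c * d)" unfolding \<nu> \<pi> by (simp add: algebra_simps)
  have "b \<noteq> 0" "c \<noteq> 0" "\<mu> \<noteq> 0" "\<nu> \<noteq> 0" "\<pi> \<noteq> 0" using bc nz \<mu> \<nu> \<pi> by auto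
  have "m \<noteq> p" using Imp Ibd \<open>\<mu> \<noteq> 0\<close> \<open>\<pi> \<noteq> 0\<close> by auto
  have sine_bcd: "gyrochord s b d * \<bar>Im (cnj c * d)\<bar> = gyrochord s c d * \<bar>Im (cnj b * d)\<bar>"
    by (rule dir_gyroline_sine_law[OF s Ue bcd(1,2,3)])
  have sine_nmp: "gyrochord s n p * (\<bar>\<mu>\<bar> * \<bar>\<pi>\<bar> * \<bar>Im (cnj b * d)\<bar>)
      = gyrochord s m p * (\<bar>\<nu>\<bar> * \<bar>\<pi>\<bar> * \<bar>Im (cnj c * d)\<bar>)"
    using dir_gyroline_sine_law[OF s Ue' mnp(2,1,3)] unfolding Imp Inp abs_mult .
  have radial: "gyrochord s n 0 = \<bar>\<nu>\<bar> * gyrochord s c 0" "gyrochord s m 0 = \<bar>\<mu>\<bar> * gyrochord s b 0"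
    unfolding gyrochord_0_right \<mu> \<nu> by (simp_all add: norm_mult)
  have pos: "\<bar>\<mu>\<bar> > 0" "\<bar>\<nu>\<bar> > 0" "\<bar>\<pi>\<bar> > 0" "\<bar>Im (cnj c * d)\<bar> > 0"
    using \<open>\<mu> \<noteq> 0\<close> \<open>\<nu> \<noteq> 0\<close> \<open>\<pi> \<noteq> 0\<close> Icd by simp_all
  show ?thesis
    unfolding gamma
    by (rule menelaus_product_arith[where Ibd = "\<bar>Im (cnj b * d)\<bar>"])
      (fact s disc_gap_pos[OF s disc(1)] disc_gap_pos[OF s disc(2)] disc_gap_pos[OF s disc(3)]
        disc_gap_pos[OF s disc(4)] disc_gap_pos[OF s disc(5)] disc_gap_pos[OF s disc(6)]
        disc_gap_pos[OF s zero] gyrochord_pos[OF s disc(1,3) bd] gyrochord_pos[OF s disc(2,3) cd]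
        gyrochord_pos[OF s disc(4,6) \<open>m \<noteq> p\<close>] gyrochord_pos[OF s disc(2) zero \<open>c \<noteq> 0\<close>]
        gyrochord_pos[OF s disc(1) zero \<open>b \<noteq> 0\<close>] pos sine_bcd sine_nmp radial)+
qed

lemma gyrotriangle_Im_cnj_ne_0:
  assumes s: "s > 0" and "gyrotriangle s A B C"
  shows "Im (cnj (mobius_add s (- A) B) * mobius_add s (- A) C) \<noteq> 0"
proof
  assume "Im (cnj (mobius_add s (- A) B) * mobius_add s (- A) C) = 0"
  moreover have A: "cmod A < s" and B: "cmod B < s" and "cmod C < s" "A \<noteq> B" "C \<notin> gyroline s A B"
    using assms(2) unfolding gyrotriangle_def mobius_disc_def by auto
  moreover have "mobius_add s (- A) B \<noteq> 0" using mobius_add_neg_eq_0_iff[OF s A B] \<open>A \<noteq> B\<close> by simp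
  ultimately show False using in_gyroline_if_Im_cnj_eq_0[OF s A B] by blast
qed

theorem theorem5:
  fixes s :: real and A B C D M N P :: complex and l :: "complex set"
  assumes "s > 0"
    and "gyrotriangle s A B C"
    and "D \<in> gyrosegment s B C" and "D \<noteq> B" and "D \<noteq> C"
    and "is_gyroline s l"
    and "A \<notin> l" and "B \<notin> l" and "C \<notin> l"
    and "M \<in> l" and "M \<in> gyroline s A B"
    and "N \<in> l" and "N \<in> gyroline s A C"
    and "P \<in> l" and "P \<in> gyroline s A D"
  shows "gamma_len s (gyrodist s B D) / gamma_len s (gyrodist s C D)
       * (gamma_len s (gyrodist s C A) / gamma_len s (gyrodist s N A))
       * (gamma_len s (gyrodist s N P) / gamma_len s (gyrodist s M P))
       * (gamma_len s (gyrodist s M A) / gamma_len s (gyrodist s B A)) = 1"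
proof -
  note s = assms(1)
  have A: "cmod A < s" and B: "cmod B < s" and C: "cmod C < s" and "B \<noteq> C"
    using assms(2) unfolding gyrotriangle_def mobius_disc_def by auto
  have BC: "is_gyroline s (gyroline s B C)" using B C \<open>B \<noteq> C\<close> unfolding is_gyroline_def mobius_disc_def by blast
  have D: "D \<in> gyroline s B C" using assms(3) unfolding gyrosegment_def gyroline_def by blast
  note disc = is_gyroline_in_disc[OF s BC] is_gyroline_in_disc[OF s assms(6)]
  define T where "T = mobius_add s (- A)"
  have "cmod (- A) < s" using A by simp
  obtain U e where Ue: "cmod U < s" "cmod e = 1" "\<And>Z. Z \<in> gyroline s B C \<Longrightarrow> T Z \<in> dir_gyroline s U e"
    using mobius_add_is_gyroline_subset[OF s \<open>cmod (- A) < s\<close> BC] unfolding T_def by blast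
  obtain U' e' where Ue': "cmod U' < s" "cmod e' = 1" "\<And>Z. Z \<in> l \<Longrightarrow> T Z \<in> dir_gyroline s U' e'"
    using mobius_add_is_gyroline_subset[OF s \<open>cmod (- A) < s\<close> assms(6)] unfolding T_def by blast
  obtain \<mu> \<nu> \<pi> where mult: "T M = complex_of_real \<mu> * T B" "T N = complex_of_real \<nu> * T C"
    "T P = complex_of_real \<pi> * T D"
    using gyroline_translate_real_multiple[OF s A] assms(11,13,15) unfolding T_def by metis
  have nz: "T Z \<noteq> 0" if "Z \<in> l" for Z
    using mobius_add_neg_eq_0_iff[OF s A disc(2)[OF that]] that assms(7) unfolding T_def by auto
  have "T B \<noteq> T D" "T C \<noteq> T D"
    using mobius_add_left_inj[OF s \<open>cmod (- A) < s\<close> _ disc(1)[OF D]] B C assms(4,5) unfolding T_def by auto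
  with gyrotriangle_Im_cnj_ne_0[OF s assms(2), folded T_def]
  have origin: "gamma_len s (gyrodist s (T B) (T D)) / gamma_len s (gyrodist s (T C) (T D))
       * (gamma_len s (gyrodist s (T C) 0) / gamma_len s (gyrodist s (T N) 0))
       * (gamma_len s (gyrodist s (T N) (T P)) / gamma_len s (gyrodist s (T M) (T P)))
       * (gamma_len s (gyrodist s (T M) 0) / gamma_len s (gyrodist s (T B) 0)) = 1"
    by (intro menelaus_at_origin[OF s Ue(1,2) Ue'(1,2) Ue(3) Ue(3) Ue(3) Ue'(3) Ue'(3) Ue'(3) mult nz nz nz])
      (simp_all add: left_in_gyroline right_in_gyroline[OF s B C] D assms(10,12,14))
  have iso: "gyrodist s Z W = gyrodist s (T Z) (T W)" if "cmod Z < s" "cmod W < s" for Z W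
    using gyrodist_mobius_add_left[OF s \<open>cmod (- A) < s\<close> that] unfolding T_def ..
  have "T A = 0" "cmod D < s" "cmod M < s" "cmod N < s" "cmod P < s"
    using disc D assms(10,12,14) unfolding T_def by simp_all
  with A B C show ?thesis
    using origin by (simp only: iso)
qed

end
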